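(* Let $n>2k$ and $k\ge 3$ be integers. Let $f^*(n,k)$ denote the maximum of $\min\{|\mathcal A|,|\mathcal B|\}$ over all pairs $\mathcal A,\mathcal B\subset\binom{[n]}{k}$ such that $\mathcal A\cap\mathcal B=\emptyset$, $\mathcal A$ and $\mathcal B$ are cross-intersecting, and neither $\mathcal A$ nor $\mathcal B$ is a star. Then $$f^*(n,k)\ge\left\lfloor\frac12\left(\binom{n-1}{k-1}-\binom{n-2k}{k-1}\right)\right\rfloor+1.$$
   Context: $[n]=\{1,\dots,n\}$ and $\binom{[n]}{k}$ is the collection of all $k$-element subsets of $[n]$. Families $\mathcal A,\mathcal B$ are cross-intersecting if $A\cap B\neq\emptyset$ for all $A\in\mathcal A$, $B\in\mathcal B$. A family $\mathcal F$ is a star if there is $x\in[n]$ with $x\in F$ for all $F\in\mathcal F$. *)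

theory Defs
  imports Main
begin

definition k_subsets :: "nat \<Rightarrow> nat \<Rightarrow> nat set set" where
  "k_subsets n k = {A. A \<subseteq> {1..n} \<and> card A = k}"

definition cross_intersecting :: "'a set set \<Rightarrow> 'a set set \<Rightarrow> bool" where
  "cross_intersecting \<A> \<B> \<longleftrightarrow> (\<forall>A\<in>\<A>. \<forall>B\<in>\<B>. A \<inter> B \<noteq> {})"

definition is_star :: "nat \<Rightarrow> nat set set \<Rightarrow> bool" where
  "is_star n \<F> \<longleftrightarrow> (\<exists>x\<in>{1..n}. \<forall>F\<in>\<F>. x \<in> F)"

definition f_star :: "nat \<Rightarrow> nat \<Rightarrow> nat" where
  "f_star n k = Max {min (card \<A>) (card \<B>) | \<A> \<B>.
      \<A> \<subseteq> k_subsets n k \<and> \<B> \<subseteq> k_subsets n k \<and> \<A> \<inter> \<B> = {} \<and>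
      cross_intersecting \<A> \<B> \<and> \<not> is_star n \<A> \<and> \<not> is_star n \<B>}"

end

theory Submission
  imports Defs
begin

text \<open>
  Let \<open>P\<close> be the family of \<open>k\<close>-subsets of \<open>[n]\<close> that contain \<open>1\<close> and meet \<open>{2..2k}\<close>;
  its size is \<open>C(n-1,k-1) - C(n-2k,k-1)\<close>. The sets \<open>S = {2..k+1}\<close> and \<open>T = {k+1..2k}\<close>
  meet in \<open>k+1\<close> and cover \<open>{2..2k}\<close>. The members of \<open>P\<close> avoiding \<open>T\<close> and those avoiding
  \<open>S\<close> are equinumerous, being exchanged by the reflection \<open>i \<mapsto> 2k+2-i\<close> of \<open>{2..2k}\<close>.
  So \<open>P\<close> splits into halves \<open>X\<close>, \<open>Y\<close> with every member of \<open>X\<close> meeting \<open>T\<close> and every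
  member of \<open>Y\<close> meeting \<open>S\<close>. Then \<open>X \<union> {S}\<close> and \<open>Y \<union> {T}\<close> are cross-intersecting
  (members of \<open>P\<close> share the point \<open>1\<close>), and neither is a star, because \<open>S\<close> misses
  \<open>{1,k+2..2k} \<in> X\<close> and \<open>T\<close> misses \<open>{1,2..k} \<in> Y\<close>. The construction only needs \<open>k \<ge> 2\<close>.
\<close>

lemma card_subsets_meeting:
  assumes "finite X"
  shows "card {B. B \<subseteq> X \<and> card B = j \<and> B \<inter> Y \<noteq> {}} = (card X choose j) - (card (X - Y) choose j)"
proof -
  have "{B. B \<subseteq> X \<and> card B = j \<and> B \<inter> Y \<noteq> {}} = {B. B \<subseteq> X \<and> card B = j} - {B. B \<subseteq> X - Y \<and> card B = j}"
    by blast
  moreover have "{B. B \<subseteq> X - Y \<and> card B = j} \<subseteq> {B. B \<subseteq> X \<and> card B = j}"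
    by blast
  ultimately show ?thesis
    using assms by (simp add: card_Diff_subset n_subsets)
qed

lemma finite_k_subsets: "finite (k_subsets n k)"
  unfolding k_subsets_def by (rule finite_subset[of _ "Pow {1..n}"]) auto

lemma min_card_le_f_star:
  assumes "\<A> \<subseteq> k_subsets n k" "\<B> \<subseteq> k_subsets n k" "\<A> \<inter> \<B> = {}"
    and "cross_intersecting \<A> \<B>" "\<not> is_star n \<A>" "\<not> is_star n \<B>"
  shows "min (card \<A>) (card \<B>) \<le> f_star n k"
proof -
  let ?Z = "{min (card \<A>) (card \<B>) | \<A> \<B>.
      \<A> \<subseteq> k_subsets n k \<and> \<B> \<subseteq> k_subsets n k \<and> \<A> \<inter> \<B> = {} \<and>
      cross_intersecting \<A> \<B> \<and> \<not> is_star n \<A> \<and> \<not> is_star n \<B>}"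
  have "?Z \<subseteq> (\<lambda>(\<A>, \<B>). min (card \<A>) (card \<B>)) ` (Pow (k_subsets n k) \<times> Pow (k_subsets n k))"
    by fastforce
  then have "finite ?Z"
    by (rule finite_subset) (simp add: finite_k_subsets)
  moreover have "min (card \<A>) (card \<B>) \<in> ?Z"
    using assms by blast
  ultimately show ?thesis
    unfolding f_star_def by (rule Max_ge)
qed

lemma card_eq_if_involution_swaps:
  assumes "\<sigma> \<circ> \<sigma> = id" "\<sigma> ` U \<subseteq> V" "\<sigma> ` V \<subseteq> U"
  shows "card U = card V"
proof -
  have "V \<subseteq> \<sigma> ` U"
  proof
    fix v assume "v \<in> V"
    have "\<sigma> (\<sigma> v) = v" using assms(1) by (simp add: pointfree_idE)
    moreover have "\<sigma> v \<in> U" using \<open>v \<in> V\<close> assms(3) by blast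
    ultimately show "v \<in> \<sigma> ` U" by (metis image_eqI)
  qed
  then have "\<sigma> ` U = V" using assms(2) by blast
  moreover have "inj \<sigma>"
    using assms(1) by (metis inj_on_id inj_on_imageI2)
  ultimately show ?thesis
    by (metis card_image inj_on_subset subset_UNIV)
qed

lemma not_star_if_disjoint_members:
  assumes "F \<in> \<F>" "G \<in> \<F>" "F \<inter> G = {}"
  shows "\<not> is_star n \<F>"
  using assms unfolding is_star_def by blast

lemma cross_intersecting_insert_insert:
  assumes "\<And>F. F \<in> \<X> \<union> \<Y> \<Longrightarrow> a \<in> F" "S \<inter> T \<noteq> {}"
    and "\<And>F. F \<in> \<X> \<Longrightarrow> F \<inter> T \<noteq> {}" "\<And>G. G \<in> \<Y> \<Longrightarrow> S \<inter> G \<noteq> {}"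
  shows "cross_intersecting (insert S \<X>) (insert T \<Y>)"
  unfolding cross_intersecting_def using assms by blast

definition star_meeting :: "nat \<Rightarrow> nat \<Rightarrow> nat set set" where
  "star_meeting n k = {F \<in> k_subsets n k. 1 \<in> F \<and> F \<inter> {2..2*k} \<noteq> {}}"

lemma card_star_meeting:
  assumes "2 * k \<le> n" "1 \<le> k"
  shows "card (star_meeting n k) = (n - 1 choose (k - 1)) - (n - 2 * k choose (k - 1))"
proof -
  let ?\<B> = "{B. B \<subseteq> {2..n} \<and> card B = k - 1 \<and> B \<inter> {2..2*k} \<noteq> {}}"
  have "star_meeting n k = insert 1 ` ?\<B>"
  proof (intro set_eqI iffI)
    fix F assume "F \<in> star_meeting n k"
    then have "F - {1} \<in> ?\<B>" "F = insert 1 (F - {1})"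
      unfolding star_meeting_def k_subsets_def by (auto dest: finite_subset)
    then show "F \<in> insert 1 ` ?\<B>" by blast
  next
    fix F assume "F \<in> insert 1 ` ?\<B>"
    then obtain B where B: "F = insert 1 B" "B \<in> ?\<B>" by blast
    then have "finite B" "1 \<notin> B"
      using finite_subset by auto
    then show "F \<in> star_meeting n k"
      using assms B unfolding star_meeting_def k_subsets_def by auto
  qed
  moreover have "inj_on (insert 1) ?\<B>"
  proof (rule inj_onI)
    fix B B' assume B: "B \<in> ?\<B>" "B' \<in> ?\<B>" and "insert 1 B = insert 1 B'"
    moreover have "1 \<notin> B" "1 \<notin> B'"
      using B by auto
    ultimately show "B = B'"
      by (simp add: insert_ident)
  qed
  moreover have "{2..n} - {2..2*k} = {2*k+1..n}" using assms by auto
  ultimately show ?thesis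
    using assms by (simp add: card_image card_subsets_meeting)
qed

definition reflect :: "nat \<Rightarrow> nat \<Rightarrow> nat" where
  "reflect k i = (if i \<in> {2..2*k} then 2*k + 2 - i else i)"

lemma reflect_reflect [simp]: "reflect k (reflect k i) = i"
  unfolding reflect_def by auto

lemma vimage_reflect_low: "reflect k -` {2..k+1} = {k+1..2*k}"
  unfolding reflect_def by (auto split: if_splits)

lemma vimage_reflect_high: "reflect k -` {k+1..2*k} = {2..k+1}"
  unfolding reflect_def by (auto split: if_splits)

lemma reflect_image_in_star_meeting:
  assumes "2 * k \<le> n" "F \<in> star_meeting n k"
  shows "reflect k ` F \<in> star_meeting n k"
proof -
  have F: "F \<subseteq> {1..n}" "card F = k" "1 \<in> F" "F \<inter> {2..2*k} \<noteq> {}"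
    using assms(2) unfolding star_meeting_def k_subsets_def by auto
  have "inj (reflect k)"
    by (metis injI reflect_reflect)
  then have "card (reflect k ` F) = k"
    using F(2) by (simp add: card_image inj_on_subset)
  moreover have "reflect k ` F \<subseteq> {1..n}"
    using F(1) assms(1) unfolding reflect_def by auto
  moreover have "reflect k 1 = 1"
    unfolding reflect_def by simp
  then have "1 \<in> reflect k ` F"
    using F(3) by (metis image_eqI)
  moreover have "reflect k ` F \<inter> {2..2*k} \<noteq> {}"
    using F(4) unfolding reflect_def by fastforce
  ultimately show ?thesis
    unfolding star_meeting_def k_subsets_def by blast
qed

lemma reflect_image_avoiding:
  assumes "2 * k \<le> n" "reflect k -` A = B"
  shows "image (reflect k) ` {F \<in> star_meeting n k. F \<inter> B = {}}
       \<subseteq> {F \<in> star_meeting n k. F \<inter> A = {}}"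
  using reflect_image_in_star_meeting[OF assms(1)] unfolding assms(2)[symmetric] by blast

lemma card_star_meeting_avoiding_eq:
  assumes "2 * k \<le> n"
  shows "card {F \<in> star_meeting n k. F \<inter> {k+1..2*k} = {}}
       = card {F \<in> star_meeting n k. F \<inter> {2..k+1} = {}}"
proof (rule card_eq_if_involution_swaps)
  show "image (reflect k) \<circ> image (reflect k) = id"
    by (simp add: fun_eq_iff image_comp comp_def)
qed (fact reflect_image_avoiding[OF assms vimage_reflect_low],
     fact reflect_image_avoiding[OF assms vimage_reflect_high])

lemma insert_1_low_in_star_meeting:
  assumes "2 * k \<le> n" "2 \<le> k"
  shows "insert 1 {2..k} \<in> star_meeting n k"
  using assms unfolding star_meeting_def k_subsets_def by auto

lemma insert_1_high_in_star_meeting: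
  assumes "2 * k \<le> n" "2 \<le> k"
  shows "insert 1 {k+2..2*k} \<in> star_meeting n k"
  using assms unfolding star_meeting_def k_subsets_def by auto

lemma balanced_split_containing:
  assumes "finite P" "\<L> \<subseteq> P" "\<R> \<subseteq> P" "\<L> \<inter> \<R> = {}" "card \<L> = card \<R>"
  obtains \<X> \<Y> where "\<R> \<subseteq> \<X>" "\<L> \<subseteq> \<Y>" "\<X> \<inter> \<Y> = {}" "\<X> \<union> \<Y> = P"
    "card P div 2 \<le> card \<X>" "card P div 2 \<le> card \<Y>"
proof -
  define \<M> where "\<M> = P - (\<L> \<union> \<R>)"
  obtain \<M>\<^sub>1 where "\<M>\<^sub>1 \<subseteq> \<M>" "card \<M>\<^sub>1 = card \<M> div 2"
    by (meson div_le_dividend obtain_subset_with_card_n)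
  have fin: "finite \<L>" "finite \<R>" "finite \<M>" "finite \<M>\<^sub>1"
    using assms(1-3) \<open>\<M>\<^sub>1 \<subseteq> \<M>\<close> unfolding \<M>_def by (auto intro: finite_subset)
  have "\<L> \<union> \<R> \<subseteq> P"
    using assms(2,3) by blast
  then have "card \<M> = card P - card (\<L> \<union> \<R>)" "card (\<L> \<union> \<R>) \<le> card P"
    using assms(1) unfolding \<M>_def by (auto intro: card_Diff_subset finite_subset card_mono)
  then have "card P = card (\<L> \<union> \<R>) + card \<M>"
    by linarith
  then have card_P: "card P = card \<L> + card \<R> + card \<M>"
    using fin assms(4) by (simp add: card_Un_disjoint)
  have card_X: "card (\<R> \<union> \<M>\<^sub>1) = card \<R> + card \<M> div 2"
    using fin \<open>\<M>\<^sub>1 \<subseteq> \<M>\<close> \<open>card \<M>\<^sub>1 = card \<M> div 2\<close> unfolding \<M>_def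
    by (subst card_Un_disjoint) auto
  have "\<R> \<union> \<M>\<^sub>1 \<subseteq> P"
    using assms(3) \<open>\<M>\<^sub>1 \<subseteq> \<M>\<close> unfolding \<M>_def by blast
  then have card_Y: "card (P - (\<R> \<union> \<M>\<^sub>1)) = card P - card (\<R> \<union> \<M>\<^sub>1)"
    using fin by (intro card_Diff_subset) (auto intro: finite_subset)
  show ?thesis
  proof (rule that[of "\<R> \<union> \<M>\<^sub>1" "P - (\<R> \<union> \<M>\<^sub>1)"])
    show "\<L> \<subseteq> P - (\<R> \<union> \<M>\<^sub>1)"
      using assms(2,4) \<open>\<M>\<^sub>1 \<subseteq> \<M>\<close> unfolding \<M>_def by blast
    show "(\<R> \<union> \<M>\<^sub>1) \<union> (P - (\<R> \<union> \<M>\<^sub>1)) = P"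
      using \<open>\<R> \<union> \<M>\<^sub>1 \<subseteq> P\<close> by blast
    show "card P div 2 \<le> card (\<R> \<union> \<M>\<^sub>1)" "card P div 2 \<le> card (P - (\<R> \<union> \<M>\<^sub>1))"
      using card_P card_X card_Y assms(5) by simp_all
  qed auto
qed

lemma nonstar_cross_intersecting_pair:
  fixes n k :: nat
  assumes "2 * k \<le> n" "2 \<le> k"
  obtains \<A> \<B> where "\<A> \<subseteq> k_subsets n k" "\<B> \<subseteq> k_subsets n k" "\<A> \<inter> \<B> = {}"
    "cross_intersecting \<A> \<B>" "\<not> is_star n \<A>" "\<not> is_star n \<B>"
    "card (star_meeting n k) div 2 + 1 \<le> min (card \<A>) (card \<B>)"
proof -
  define P where "P = star_meeting n k"
  define S where "S = {2..k+1}"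
  define T where "T = {k+1..2*k}"
  define \<L> where "\<L> = {F \<in> P. F \<inter> T = {}}"
  define \<R> where "\<R> = {F \<in> P. F \<inter> S = {}}"
  have "{2..2*k} = S \<union> T"
    using assms unfolding S_def T_def by auto
  then have P: "F \<in> k_subsets n k" "1 \<in> F" "F \<inter> (S \<union> T) \<noteq> {}" if "F \<in> P" for F
    using that unfolding P_def star_meeting_def by auto
  have "finite P"
    using P(1) finite_k_subsets by (blast intro: finite_subset)
  have "S \<notin> P" "T \<notin> P"
    using P(2)[of S] P(2)[of T] assms unfolding S_def T_def by auto
  have "S \<in> k_subsets n k" "T \<in> k_subsets n k"
    using assms unfolding S_def T_def k_subsets_def by auto
  moreover have "2 \<in> S - T" "k + 1 \<in> S \<inter> T"
    using assms unfolding S_def T_def by auto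
  ultimately have ST: "S \<in> k_subsets n k" "T \<in> k_subsets n k" "S \<noteq> T" "S \<inter> T \<noteq> {}"
    by blast+
  have "\<L> \<inter> \<R> = {}"
    using P(3) unfolding \<L>_def \<R>_def by blast
  moreover have "card \<L> = card \<R>"
    using card_star_meeting_avoiding_eq[OF assms(1)] unfolding \<L>_def \<R>_def P_def S_def T_def .
  moreover have "\<L> \<subseteq> P" "\<R> \<subseteq> P"
    unfolding \<L>_def \<R>_def by blast+
  ultimately obtain \<X> \<Y> where XY: "\<R> \<subseteq> \<X>" "\<L> \<subseteq> \<Y>" "\<X> \<inter> \<Y> = {}" "\<X> \<union> \<Y> = P"
    "card P div 2 \<le> card \<X>" "card P div 2 \<le> card \<Y>"
    using balanced_split_containing[OF \<open>finite P\<close>] by metis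
  show ?thesis
  proof
    show "insert S \<X> \<subseteq> k_subsets n k" "insert T \<Y> \<subseteq> k_subsets n k"
      using P(1) ST(1,2) XY(4) by blast+
    show "insert S \<X> \<inter> insert T \<Y> = {}"
      using XY(3,4) \<open>S \<notin> P\<close> \<open>T \<notin> P\<close> ST(3) by blast
    show "cross_intersecting (insert S \<X>) (insert T \<Y>)"
    proof (rule cross_intersecting_insert_insert)
      show "1 \<in> F" if "F \<in> \<X> \<union> \<Y>" for F
        using that P(2) XY(4) by blast
      show "F \<inter> T \<noteq> {}" if "F \<in> \<X>" for F
        using that P(3) XY(2-4) unfolding \<L>_def by blast
      show "S \<inter> G \<noteq> {}" if "G \<in> \<Y>" for G
        using that P(3) XY(1,3,4) unfolding \<R>_def by blast
    qed (fact ST)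
    have "insert 1 {k+2..2*k} \<in> \<R>"
      using insert_1_high_in_star_meeting[OF assms] unfolding \<R>_def P_def S_def by auto
    then show "\<not> is_star n (insert S \<X>)"
      using XY(1) by (intro not_star_if_disjoint_members[of "insert 1 {k+2..2*k}" _ S])
        (auto simp: \<R>_def)
    have "insert 1 {2..k} \<in> \<L>"
      using insert_1_low_in_star_meeting[OF assms] unfolding \<L>_def P_def T_def by auto
    then show "\<not> is_star n (insert T \<Y>)"
      using XY(2) by (intro not_star_if_disjoint_members[of "insert 1 {2..k}" _ T])
        (auto simp: \<L>_def)
    have "finite \<X>" "finite \<Y>" "S \<notin> \<X>" "T \<notin> \<Y>"
      using \<open>finite P\<close> XY(4) \<open>S \<notin> P\<close> \<open>T \<notin> P\<close> by (auto intro: finite_subset)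
    then show "card (star_meeting n k) div 2 + 1 \<le> min (card (insert S \<X>)) (card (insert T \<Y>))"
      using XY(5,6) unfolding P_def by simp
  qed
qed

theorem proposition2p2:
  fixes n k :: nat
  assumes "n > 2 * k" and "k \<ge> 3"
  shows "f_star n k \<ge> ((n - 1 choose (k - 1)) - (n - 2 * k choose (k - 1))) div 2 + 1"
proof -
  have "2 * k \<le> n" "2 \<le> k"
    using assms by linarith+
  then obtain \<A> \<B> where "\<A> \<subseteq> k_subsets n k" "\<B> \<subseteq> k_subsets n k" "\<A> \<inter> \<B> = {}"
    "cross_intersecting \<A> \<B>" "\<not> is_star n \<A>" "\<not> is_star n \<B>"
    and large: "card (star_meeting n k) div 2 + 1 \<le> min (card \<A>) (card \<B>)"
    by (rule nonstar_cross_intersecting_pair)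
  then have "min (card \<A>) (card \<B>) \<le> f_star n k"
    by (intro min_card_le_f_star)
  moreover have "card (star_meeting n k) = (n - 1 choose (k - 1)) - (n - 2 * k choose (k - 1))"
    using \<open>2 * k \<le> n\<close> \<open>2 \<le> k\<close> by (intro card_star_meeting) simp_all
  ultimately show ?thesis
    using large by linarith
qed

end
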